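(* Let $\mathcal{G}=(G,\lambda)$ be a simple temporal clique, $G=(V,E)$, let $\mathcal{T}^-=(V,E^-_T)$ be obtained by the forward construction and $\mathcal{T}^+=(V,E^+_T)$ by the backward construction, let $X^-$ be the set of emitters and $X^+$ the set of collectors, and let $E_H=\{\{u,v\}\in E: u\in X^-, v\in X^+\}$. Then the bidirectional fireworks cover $S=\{\{u,v\}:(u,v)\in E^-_T\cup E^+_T\}\cup E_H$ is a temporal spanner of $\mathcal{G}$.
   Context: A simple temporal clique is a pair $\mathcal{G}=(G,\lambda)$ where $G=(V,E)$ is the complete graph on a finite vertex set $V$ and $\lambda:E\to\mathbb{N}$ assigns to each edge a single integer label such that any two distinct edges sharing an endpoint have different labels; the label of an arc $(x,y)$ is $\lambda(\{x,y\})$. A journey from $x$ to $y$ is a sequence of vertices $x=u_0,\dots,u_k=y$ ($k\ge1$) with $\lambda(\{u_{i-1},u_i\})<\lambda(\{u_i,u_{i+1}\})$ for $1\le i<k$. A set $E'\subseteq E$ is a temporal spanner of $\mathcal{G}$ if for every ordered pair of distinct vertices $x,y$ there is a journey from $x$ to $y$ using only edges of $E'$. For a vertex $v$, $e^-(v)$ (resp. $e^+(v)$) is the edge incident to $v$ with smallest (resp. largest) label. Forward construction: let $E^-$ be the set of arcs $(u,v)$ with $\{u,v\}=e^-(v)$, except that if $e^-(u)=e^-(v)=\{u,v\}$ only one of $(u,v),(v,u)$ is included (arbitrarily). Initialize $E^-_T:=E^-$; for every vertex $v$ of out-degree at least $2$ in $(V,E^-)$, with out-arcs $(v,u_1),\dots,(v,u_\ell)$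 where $(v,u_\ell)$ has the largest label, for each $i<\ell$: if $u_i$ has out-degree $0$ in $(V,E^-)$ replace $(v,u_i)$ by $(u_i,v)$ in $E^-_T$, otherwise remove $(v,u_i)$ from $E^-_T$. Emitters are vertices of out-degree $0$ in $(V,E^-_T)$. Backward construction: let $E^+$ be the set of arcs $(v,u)$ with $\{u,v\}=e^+(v)$, except that if $e^+(u)=e^+(v)=\{u,v\}$ only one of $(u,v),(v,u)$ is included (arbitrarily). Initialize $E^+_T:=E^+$; for every vertex $v$ of in-degree at least $2$ in $(V,E^+)$, with in-arcs $(u_1,v),\dots,(u_\ell,v)$ where $(u_\ell,v)$ has the smallest label, for each $i<\ell$: if $u_i$ has in-degree $0$ in $(V,E^+)$ replace $(u_i,v)$ by $(v,u_i)$ in $E^+_T$, otherwise remove $(u_i,v)$ from $E^+_T$. Collectors are vertices of in-degree $0$ in $(V,E^+_T)$. *)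

theory Defs
  imports Main
begin

text \<open>Vertices have type 'a; V is the finite vertex set; edges are two-element sets;
  lam is the labelling (only its values on clique edges matter). Arcs are pairs.\<close>

definition clique_edges :: "'a set \<Rightarrow> 'a set set" where
  "clique_edges V = {{u, v} | u v. u \<in> V \<and> v \<in> V \<and> u \<noteq> v}"

definition simple_temporal_clique :: "'a set \<Rightarrow> ('a set \<Rightarrow> nat) \<Rightarrow> bool" where
  "simple_temporal_clique V lam \<longleftrightarrow> finite V \<and>
     (\<forall>e \<in> clique_edges V. \<forall>f \<in> clique_edges V. e \<noteq> f \<and> e \<inter> f \<noteq> {} \<longrightarrow> lam e \<noteq> lam f)"

definition e_min :: "'a set \<Rightarrow> ('a set \<Rightarrow> nat) \<Rightarrow> 'a \<Rightarrow> 'a set" where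
  "e_min V lam v = arg_min_on lam {e \<in> clique_edges V. v \<in> e}"

definition e_max :: "'a set \<Rightarrow> ('a set \<Rightarrow> nat) \<Rightarrow> 'a \<Rightarrow> 'a set" where
  "e_max V lam v = arg_max_on lam {e \<in> clique_edges V. v \<in> e}"

definition minus_arcs :: "'a set \<Rightarrow> ('a set \<Rightarrow> nat) \<Rightarrow> ('a \<times> 'a) set" where
  "minus_arcs V lam = {(u, v). u \<in> V \<and> v \<in> V \<and> u \<noteq> v \<and> {u, v} = e_min V lam v}"

definition plus_arcs :: "'a set \<Rightarrow> ('a set \<Rightarrow> nat) \<Rightarrow> ('a \<times> 'a) set" where
  "plus_arcs V lam = {(v, u). u \<in> V \<and> v \<in> V \<and> u \<noteq> v \<and> {u, v} = e_max V lam v}"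

text \<open>A is an admissible choice from the candidate arcs C: every candidate arc is kept,
  except that of two opposite candidate arcs exactly one is kept (arbitrarily).\<close>
definition valid_choice :: "('a \<times> 'a) set \<Rightarrow> ('a \<times> 'a) set \<Rightarrow> bool" where
  "valid_choice C A \<longleftrightarrow> A \<subseteq> C \<and>
     (\<forall>u v. (u, v) \<in> C \<longrightarrow> (u, v) \<in> A \<or> (v, u) \<in> A) \<and>
     (\<forall>u v. (u, v) \<in> A \<longrightarrow> (v, u) \<notin> A)"

definition outdeg :: "('a \<times> 'a) set \<Rightarrow> 'a \<Rightarrow> nat" where
  "outdeg A v = card {u. (v, u) \<in> A}"

definition indeg :: "('a \<times> 'a) set \<Rightarrow> 'a \<Rightarrow> nat" where
  "indeg A v = card {u. (u, v) \<in> A}"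

text \<open>Forward construction E^-_T from E^- (= A): for v of out-degree at least 2, every
  out-arc (v,u) other than the one of largest label is reversed if u has out-degree 0
  in A, and removed otherwise.\<close>
definition forward_tree :: "('a set \<Rightarrow> nat) \<Rightarrow> ('a \<times> 'a) set \<Rightarrow> ('a \<times> 'a) set" where
  "forward_tree lam A =
     {(v, u). (v, u) \<in> A \<and>
        (outdeg A v < 2 \<or> (\<forall>w. (v, w) \<in> A \<longrightarrow> lam {v, w} \<le> lam {v, u}))}
   \<union> {(u, v). (v, u) \<in> A \<and> outdeg A v \<ge> 2 \<and>
        \<not> (\<forall>w. (v, w) \<in> A \<longrightarrow> lam {v, w} \<le> lam {v, u}) \<and> outdeg A u = 0}"

text \<open>Backward construction E^+_T from E^+ (= B): for v of in-degree at least 2, every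
  in-arc (u,v) other than the one of smallest label is reversed if u has in-degree 0
  in B, and removed otherwise.\<close>
definition backward_tree :: "('a set \<Rightarrow> nat) \<Rightarrow> ('a \<times> 'a) set \<Rightarrow> ('a \<times> 'a) set" where
  "backward_tree lam B =
     {(u, v). (u, v) \<in> B \<and>
        (indeg B v < 2 \<or> (\<forall>w. (w, v) \<in> B \<longrightarrow> lam {u, v} \<le> lam {w, v}))}
   \<union> {(v, u). (u, v) \<in> B \<and> indeg B v \<ge> 2 \<and>
        \<not> (\<forall>w. (w, v) \<in> B \<longrightarrow> lam {u, v} \<le> lam {w, v}) \<and> indeg B u = 0}"

definition emitters :: "'a set \<Rightarrow> ('a \<times> 'a) set \<Rightarrow> 'a set" where
  "emitters V T = {v \<in> V. outdeg T v = 0}"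

definition collectors :: "'a set \<Rightarrow> ('a \<times> 'a) set \<Rightarrow> 'a set" where
  "collectors V T = {v \<in> V. indeg T v = 0}"

definition journey :: "('a set \<Rightarrow> nat) \<Rightarrow> 'a set set \<Rightarrow> 'a list \<Rightarrow> 'a \<Rightarrow> 'a \<Rightarrow> bool" where
  "journey lam E' p x y \<longleftrightarrow> length p \<ge> 2 \<and> hd p = x \<and> last p = y \<and>
     (\<forall>i. i + 1 < length p \<longrightarrow> {p ! i, p ! (i + 1)} \<in> E') \<and>
     (\<forall>i. i + 2 < length p \<longrightarrow> lam {p ! i, p ! (i + 1)} < lam {p ! (i + 1), p ! (i + 2)})"

definition temporal_spanner :: "'a set \<Rightarrow> ('a set \<Rightarrow> nat) \<Rightarrow> 'a set set \<Rightarrow> bool" where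
  "temporal_spanner V lam E' \<longleftrightarrow> E' \<subseteq> clique_edges V \<and>
     (\<forall>x \<in> V. \<forall>y \<in> V. x \<noteq> y \<longrightarrow> (\<exists>p. journey lam E' p x y))"

end

theory Submission
  imports Defs
begin

(* Labels strictly increase along consecutive arcs of E^-_T, so following them from any vertex
   ends at an emitter u, the last edge being e^-(u), the earliest edge at u. Dually, following
   arcs of E^+_T backwards from any vertex ends at a collector v, the first edge being e^+(v),
   the latest edge at v. Hence the hub edge {u,v} fits in time between the two halves; when it
   coincides with e^-(u) or e^+(v), or when u = v, the corresponding step is simply skipped. *)

section \<open>Temporal reachability\<close>

(* temporal_reach lam E x s z t: starting at x at time s one can be at z at time t, crossing
   each edge e of E at time lam e and leaving its far end from time lam e + 1 on. *)
inductive temporal_reach :: "('a set \<Rightarrow> nat) \<Rightarrow> 'a set set \<Rightarrow> 'a \<Rightarrow> nat \<Rightarrow> 'a \<Rightarrow> nat \<Rightarrow> bool"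
  for lam E where
  wait: "s \<le> t \<Longrightarrow> temporal_reach lam E x s x t"
| edge: "{x, y} \<in> E \<Longrightarrow> s \<le> lam {x, y} \<Longrightarrow> temporal_reach lam E y (Suc (lam {x, y})) z t
          \<Longrightarrow> temporal_reach lam E x s z t"

lemma temporal_reach_start_mono:
  "temporal_reach lam E x s z t \<Longrightarrow> s' \<le> s \<Longrightarrow> temporal_reach lam E x s' z t"
  by (induction rule: temporal_reach.induct) (auto intro: temporal_reach.intros)

lemma temporal_reach_trans:
  "temporal_reach lam E x s y t \<Longrightarrow> temporal_reach lam E y t z r \<Longrightarrow> temporal_reach lam E x s z r"
  by (induction rule: temporal_reach.induct) (auto intro: temporal_reach.edge temporal_reach_start_mono)

lemma temporal_reach_end_mono:
  "temporal_reach lam E x s z t \<Longrightarrow> t \<le> t' \<Longrightarrow> temporal_reach lam E x s z t'"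
  by (blast intro: temporal_reach_trans temporal_reach.wait)

lemma temporal_reach_edge:
  "{x, y} \<in> E \<Longrightarrow> s \<le> lam {x, y} \<Longrightarrow> lam {x, y} < t \<Longrightarrow> temporal_reach lam E x s y t"
  by (rule temporal_reach.edge) (auto intro: temporal_reach.wait)

lemma temporal_reach_across_edge:
  assumes "temporal_reach lam E x s a (lam {a, b}) \<or> temporal_reach lam E x s b (lam {a, b})"
    and "temporal_reach lam E a (Suc (lam {a, b})) y t \<or> temporal_reach lam E b (Suc (lam {a, b})) y t"
    and "{a, b} \<in> E"
  shows "temporal_reach lam E x s y t"
proof -
  have "temporal_reach lam E a (lam {a, b}) c (Suc (lam {a, b}))"
    and "temporal_reach lam E b (lam {a, b}) c (Suc (lam {a, b}))" if "c \<in> {a, b}" for c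
    using that assms(3) by (auto intro: temporal_reach_edge temporal_reach.wait simp: insert_commute)
  then show ?thesis
    using assms(1,2) by (blast intro: temporal_reach_trans)
qed

lemma journey_edge: "{x, y} \<in> E \<Longrightarrow> journey lam E [x, y] x y"
  unfolding journey_def by (auto simp: less_Suc_eq)

lemma journey_Cons:
  assumes "journey lam E p y z" and "{x, y} \<in> E" and "lam {x, y} < lam {p ! 0, p ! 1}"
  shows "journey lam E (x # p) x z"
proof -
  obtain q where p: "p = y # q" "q \<noteq> []"
    using assms(1) unfolding journey_def by (cases p; cases "tl p") auto
  show ?thesis
    unfolding journey_def
  proof (intro conjI allI impI)
    fix i
    assume "i + 1 < length (x # p)"
    then show "{(x # p) ! i, (x # p) ! (i + 1)} \<in> E"
      using assms(1,2) p unfolding journey_def by (cases i) auto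
  next
    fix i
    assume "i + 2 < length (x # p)"
    then show "lam {(x # p) ! i, (x # p) ! (i + 1)} < lam {(x # p) ! (i + 1), (x # p) ! (i + 2)}"
      using assms p unfolding journey_def by (cases i) auto
  qed (use assms(1) p in \<open>auto simp: journey_def\<close>)
qed

lemma temporal_reach_journey:
  "temporal_reach lam E x s z t \<Longrightarrow> x = z \<or> (\<exists>p. journey lam E p x z \<and> s \<le> lam {p ! 0, p ! 1})"
proof (induction rule: temporal_reach.induct)
  case (edge x y s z t)
  then consider "y = z" | p where "journey lam E p y z" "Suc (lam {x, y}) \<le> lam {p ! 0, p ! 1}"
    by blast
  then show ?case
  proof cases
    case 1
    then show ?thesis using edge.hyps journey_edge[of x y E lam] by auto
  next
    case (2 p)
    then have "journey lam E (x # p) x z"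
      using edge.hyps by (intro journey_Cons) auto
    moreover have "p ! 0 = y"
      using 2 unfolding journey_def by (cases p) auto
    ultimately show ?thesis using edge.hyps by (intro disjI2 exI[of _ "x # p"]) auto
  qed
qed simp

section \<open>Paths along label-increasing arcs\<close>

lemma increasing_path_to_target:
  assumes "finite T"
    and increasing: "\<And>x y z. (x, y) \<in> T \<Longrightarrow> (y, z) \<in> T \<Longrightarrow> lam {x, y} < lam {y, z}"
    and continues: "\<And>x y. (x, y) \<in> T \<Longrightarrow> y \<notin> X \<Longrightarrow> \<exists>z. (y, z) \<in> T"
    and edges: "\<And>x y. (x, y) \<in> T \<Longrightarrow> {x, y} \<in> E"
    and "(x, y) \<in> T"
  shows "\<exists>w u. (w, u) \<in> T \<and> u \<in> X \<and> temporal_reach lam E x (lam {x, y}) w (lam {w, u})"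
proof -
  define K where "K = Max ((\<lambda>(a, b). lam {a, b}) ` T)"
  have bounded: "lam {a, b} \<le> K" if "(a, b) \<in> T" for a b
    unfolding K_def using assms(1) that by (auto intro: Max_ge)
  from assms(5) show ?thesis
  proof (induction "K - lam {x, y}" arbitrary: x y rule: less_induct)
    case less
    show ?case
    proof (cases "y \<in> X")
      case True
      then show ?thesis using less.prems by (blast intro: temporal_reach.wait)
    next
      case False
      then obtain z where yz: "(y, z) \<in> T" using continues less.prems by blast
      have step: "lam {x, y} < lam {y, z}" using increasing less.prems yz .
      then have "K - lam {y, z} < K - lam {x, y}" using bounded[OF yz] by linarith
      from less.hyps[OF this yz] obtain w u where "(w, u) \<in> T" "u \<in> X"
        and "temporal_reach lam E y (lam {y, z}) w (lam {w, u})" by blast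
      moreover have "temporal_reach lam E x (lam {x, y}) y (lam {y, z})"
        using edges[OF less.prems] step by (rule temporal_reach_edge[OF _ order.refl])
      ultimately show ?thesis by (blast intro: temporal_reach_trans)
    qed
  qed
qed

lemma increasing_path_from_source:
  assumes increasing: "\<And>x y z. (x, y) \<in> T \<Longrightarrow> (y, z) \<in> T \<Longrightarrow> lam {x, y} < lam {y, z}"
    and continues: "\<And>x y. (x, y) \<in> T \<Longrightarrow> x \<notin> X \<Longrightarrow> \<exists>w. (w, x) \<in> T"
    and edges: "\<And>x y. (x, y) \<in> T \<Longrightarrow> {x, y} \<in> E"
    and "(x, y) \<in> T"
  shows "\<exists>v z. (v, z) \<in> T \<and> v \<in> X \<and>
           temporal_reach lam E z (Suc (lam {v, z})) y (Suc (lam {x, y}))"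
  using assms(4)
proof (induction "lam {x, y}" arbitrary: x y rule: less_induct)
  case less
  show ?case
  proof (cases "x \<in> X")
    case True
    then show ?thesis using less.prems by (blast intro: temporal_reach.wait)
  next
    case False
    then obtain w where wx: "(w, x) \<in> T" using continues less.prems by blast
    have step: "lam {w, x} < lam {x, y}" using increasing wx less.prems .
    from less.hyps[OF this wx] obtain v z where "(v, z) \<in> T" "v \<in> X"
      and "temporal_reach lam E z (Suc (lam {v, z})) x (Suc (lam {w, x}))" by blast
    moreover have "temporal_reach lam E x (Suc (lam {w, x})) y (Suc (lam {x, y}))"
      using edges[OF less.prems] step by (auto intro: temporal_reach_edge)
    ultimately show ?thesis by (blast intro: temporal_reach_trans)
  qed
qed

section \<open>The forward and backward constructions\<close>

lemma forward_treeE: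
  assumes "(x, y) \<in> forward_tree lam A"
  obtains (kept) "(x, y) \<in> A" "outdeg A x < 2 \<or> (\<forall>w. (x, w) \<in> A \<longrightarrow> lam {x, w} \<le> lam {x, y})"
  | (reversed) "(y, x) \<in> A" "2 \<le> outdeg A y" "\<exists>w. (y, w) \<in> A \<and> lam {y, x} < lam {y, w}"
      "outdeg A x = 0"
  using assms unfolding forward_tree_def by (auto simp: not_le)

lemma backward_treeE:
  assumes "(x, y) \<in> backward_tree lam B"
  obtains (kept) "(x, y) \<in> B" "indeg B y < 2 \<or> (\<forall>w. (w, y) \<in> B \<longrightarrow> lam {x, y} \<le> lam {w, y})"
  | (reversed) "(y, x) \<in> B" "2 \<le> indeg B x" "\<exists>w. (w, x) \<in> B \<and> lam {w, x} < lam {y, x}"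
      "indeg B y = 0"
  using assms unfolding backward_tree_def by (auto simp: not_le)

lemma forward_tree_out_arc:
  assumes "2 \<le> outdeg A y"
  shows "\<exists>z. (y, z) \<in> forward_tree lam A"
proof -
  let ?W = "{w. (y, w) \<in> A}"
  have "card ?W > 0" using assms unfolding outdeg_def by simp
  then have "finite ?W" "?W \<noteq> {}" using card_gt_0_iff by blast+
  then obtain z where "z \<in> ?W" "lam {y, z} = Max ((\<lambda>w. lam {y, w}) ` ?W)"
    by (metis (no_types, lifting) Max_in finite_imageI image_iff image_is_empty)
  then have "(y, z) \<in> A" "\<forall>w. (y, w) \<in> A \<longrightarrow> lam {y, w} \<le> lam {y, z}"
    using \<open>finite ?W\<close> by auto
  then show ?thesis unfolding forward_tree_def by blast
qed

lemma backward_tree_in_arc: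
  assumes "2 \<le> indeg B y"
  shows "\<exists>z. (z, y) \<in> backward_tree lam B"
proof -
  have "card {w. (w, y) \<in> B} > 0" using assms unfolding indeg_def by simp
  then obtain k where "(k, y) \<in> B" using card_gt_0_iff by fastforce
  then obtain z where "(z, y) \<in> B" "\<forall>w. (w, y) \<in> B \<longrightarrow> lam {z, y} \<le> lam {w, y}"
    using ex_has_least_nat[of "\<lambda>w. (w, y) \<in> B" k "\<lambda>w. lam {w, y}"] by blast
  then show ?thesis unfolding backward_tree_def by blast
qed

lemma not_emitter_out_arc: "y \<in> V \<Longrightarrow> y \<notin> emitters V T \<Longrightarrow> \<exists>z. (y, z) \<in> T"
  by (rule ccontr) (simp add: emitters_def outdeg_def)

lemma not_collector_in_arc: "y \<in> V \<Longrightarrow> y \<notin> collectors V T \<Longrightarrow> \<exists>z. (z, y) \<in> T"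
  by (rule ccontr) (simp add: collectors_def indeg_def)

lemma emitter_no_out_arc:
  assumes "finite T" and "y \<in> emitters V T"
  shows "(y, z) \<notin> T"
proof -
  have "finite {z. (y, z) \<in> T}"
    using finite_imageI[OF assms(1), of snd] by (rule finite_subset[rotated]) force
  then show ?thesis using assms(2) unfolding emitters_def outdeg_def by auto
qed

lemma collector_no_in_arc:
  assumes "finite T" and "y \<in> collectors V T"
  shows "(z, y) \<notin> T"
proof -
  have "finite {z. (z, y) \<in> T}"
    using finite_imageI[OF assms(1), of fst] by (rule finite_subset[rotated]) force
  then show ?thesis using assms(2) unfolding collectors_def indeg_def by auto
qed

lemma finite_clique_edges: "finite V \<Longrightarrow> finite (clique_edges V)"
  by (rule finite_subset[of _ "Pow V"]) (auto simp: clique_edges_def)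

lemma simple_temporal_clique_labels_differ:
  assumes "simple_temporal_clique V lam" and "a \<in> V" "b \<in> V" "c \<in> V" "a \<noteq> c" "b \<noteq> c" "a \<noteq> b"
  shows "lam {a, c} \<noteq> lam {b, c}"
proof -
  have "{a, c} \<in> clique_edges V" "{b, c} \<in> clique_edges V"
    unfolding clique_edges_def using assms by blast+
  moreover have "{a, c} \<noteq> {b, c}" "{a, c} \<inter> {b, c} \<noteq> {}"
    using assms by (auto simp: doubleton_eq_iff)
  ultimately show ?thesis
    using assms(1) unfolding simple_temporal_clique_def by simp
qed

lemma e_min_least:
  assumes "finite V" and "c \<in> V" "v \<in> V" "v \<noteq> c"
  shows "lam (e_min V lam c) \<le> lam {v, c}"
proof -
  have "finite {e \<in> clique_edges V. c \<in> e}"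
    using finite_clique_edges[OF assms(1)] by simp
  moreover have "{v, c} \<in> {e \<in> clique_edges V. c \<in> e}"
    unfolding clique_edges_def using assms by blast
  ultimately show ?thesis
    unfolding e_min_def by (intro arg_min_least) auto
qed

lemma arg_max_on_greatest:
  fixes f :: "'a \<Rightarrow> nat"
  assumes "finite S" and "y \<in> S"
  shows "f y \<le> f (arg_max_on f S)"
  unfolding arg_max_on_def using assms
  by (intro arg_max_nat_le[where b = "Suc (Max (f ` S))"]) (auto simp: le_imp_less_Suc)

lemma e_max_greatest:
  assumes "finite V" and "c \<in> V" "v \<in> V" "v \<noteq> c"
  shows "lam {v, c} \<le> lam (e_max V lam c)"
proof -
  have "finite {e \<in> clique_edges V. c \<in> e}"
    using finite_clique_edges[OF assms(1)] by simp
  moreover have "{v, c} \<in> {e \<in> clique_edges V. c \<in> e}"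
    unfolding clique_edges_def using assms by blast
  ultimately show ?thesis
    unfolding e_max_def by (intro arg_max_on_greatest) auto
qed

section \<open>The bidirectional fireworks cover\<close>

locale fireworks =
  fixes V :: "'a set" and lam :: "'a set \<Rightarrow> nat" and Em Ep :: "('a \<times> 'a) set"
  assumes clique: "simple_temporal_clique V lam"
    and Em_choice: "valid_choice (minus_arcs V lam) Em"
    and Ep_choice: "valid_choice (plus_arcs V lam) Ep"
begin

abbreviation "T_minus \<equiv> forward_tree lam Em"
abbreviation "T_plus \<equiv> backward_tree lam Ep"
definition cover :: "'a set set" where
  "cover = {{u, v} | u v. (u, v) \<in> T_minus \<union> T_plus}
    \<union> {e \<in> clique_edges V. \<exists>u v. e = {u, v} \<and> u \<in> emitters V T_minus \<and> v \<in> collectors V T_plus}"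

abbreviation "reach \<equiv> temporal_reach lam cover"

lemma finite_V: "finite V"
  using clique unfolding simple_temporal_clique_def by blast

lemma labels_differ:
  "a \<in> V \<Longrightarrow> b \<in> V \<Longrightarrow> c \<in> V \<Longrightarrow> a \<noteq> c \<Longrightarrow> b \<noteq> c \<Longrightarrow> a \<noteq> b \<Longrightarrow> lam {a, c} \<noteq> lam {b, c}"
  using simple_temporal_clique_labels_differ[OF clique] by blast

lemma Em_arc: "(p, c) \<in> Em \<Longrightarrow> p \<in> V \<and> c \<in> V \<and> p \<noteq> c \<and> {p, c} = e_min V lam c"
  using Em_choice unfolding valid_choice_def minus_arcs_def by auto

lemma Em_least: "(p, c) \<in> Em \<Longrightarrow> v \<in> V \<Longrightarrow> v \<noteq> c \<Longrightarrow> v \<noteq> p \<Longrightarrow> lam {p, c} < lam {v, c}"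
  using Em_arc e_min_least[OF finite_V] labels_differ by (metis order.not_eq_order_implies_strict)

lemma Em_unique_parent: "(p, c) \<in> Em \<Longrightarrow> (q, c) \<in> Em \<Longrightarrow> p = q"
  using Em_arc by (metis doubleton_eq_iff)

lemma Em_asym: "(p, c) \<in> Em \<Longrightarrow> (c, p) \<notin> Em"
  using Em_choice unfolding valid_choice_def by blast

lemma Ep_arc: "(v, u) \<in> Ep \<Longrightarrow> u \<in> V \<and> v \<in> V \<and> u \<noteq> v \<and> {u, v} = e_max V lam v"
  using Ep_choice unfolding valid_choice_def plus_arcs_def by auto

lemma Ep_greatest: "(v, u) \<in> Ep \<Longrightarrow> q \<in> V \<Longrightarrow> q \<noteq> v \<Longrightarrow> q \<noteq> u \<Longrightarrow> lam {q, v} < lam {u, v}"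
  using Ep_arc e_max_greatest[OF finite_V] labels_differ by (metis order.not_eq_order_implies_strict)

lemma Ep_unique_child: "(v, u) \<in> Ep \<Longrightarrow> (v, w) \<in> Ep \<Longrightarrow> u = w"
  using Ep_arc by (metis doubleton_eq_iff)

lemma Ep_asym: "(v, u) \<in> Ep \<Longrightarrow> (u, v) \<notin> Ep"
  using Ep_choice unfolding valid_choice_def by blast

lemma T_minus_vertices: "(x, y) \<in> T_minus \<Longrightarrow> x \<in> V \<and> y \<in> V \<and> x \<noteq> y"
  by (erule forward_treeE) (auto dest: Em_arc)

lemma T_plus_vertices: "(x, y) \<in> T_plus \<Longrightarrow> x \<in> V \<and> y \<in> V \<and> x \<noteq> y"
  by (erule backward_treeE) (auto dest: Ep_arc)

lemma finite_T_minus: "finite T_minus"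
  by (rule finite_subset[of _ "V \<times> V"]) (auto dest: T_minus_vertices simp: finite_V)

lemma finite_T_plus: "finite T_plus"
  by (rule finite_subset[of _ "V \<times> V"]) (auto dest: T_plus_vertices simp: finite_V)

lemma T_minus_increasing:
  assumes xy: "(x, y) \<in> T_minus" and yz: "(y, z) \<in> T_minus"
  shows "lam {x, y} < lam {y, z}"
  using xy
proof (cases rule: forward_treeE)
  case xy_kept: kept
  from yz show ?thesis
  proof (cases rule: forward_treeE)
    case kept
    then have "z \<in> V" "z \<noteq> y" "z \<noteq> x"
      using xy_kept(1) Em_arc Em_asym by blast+
    then have "lam {x, y} < lam {z, y}" using Em_least[OF xy_kept(1)] by blast
    then show ?thesis by (metis insert_commute)
  next
    case reversed
    then have "z = x" using xy_kept(1) Em_unique_parent by blast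
    then show ?thesis using xy_kept(2) reversed(2,3) by force
  qed
next
  case xy_reversed: reversed
  from yz show ?thesis
  proof (cases rule: forward_treeE)
    case kept
    then show ?thesis
      using xy_reversed(2,3) by (force simp: insert_commute)
  next
    case reversed
    then show ?thesis using xy_reversed(2) by simp
  qed
qed

lemma T_plus_increasing:
  assumes xy: "(x, y) \<in> T_plus" and yz: "(y, z) \<in> T_plus"
  shows "lam {x, y} < lam {y, z}"
  using yz
proof (cases rule: backward_treeE)
  case yz_kept: kept
  from xy show ?thesis
  proof (cases rule: backward_treeE)
    case kept
    then have "x \<in> V" "x \<noteq> y" "x \<noteq> z"
      using yz_kept(1) Ep_arc Ep_asym by blast+
    then have "lam {x, y} < lam {z, y}" using Ep_greatest[OF yz_kept(1)] by blast
    then show ?thesis by (metis insert_commute)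
  next
    case reversed
    then have "x = z" using yz_kept(1) Ep_unique_child by blast
    then show ?thesis using yz_kept(2) reversed(2,3) by force
  qed
next
  case yz_reversed: reversed
  from xy show ?thesis
  proof (cases rule: backward_treeE)
    case kept
    then show ?thesis
      using yz_reversed(2,3) by (force simp: insert_commute)
  next
    case reversed
    then show ?thesis using yz_reversed(2) by simp
  qed
qed

lemma T_minus_into_emitter:
  assumes "(x, y) \<in> T_minus" and "y \<in> emitters V T_minus"
  shows "(x, y) \<in> Em"
  using assms(1)
proof (cases rule: forward_treeE)
  case reversed
  then show ?thesis
    using forward_tree_out_arc[of Em y lam] emitter_no_out_arc[OF finite_T_minus assms(2)] by blast
qed

lemma T_plus_from_collector:
  assumes "(x, y) \<in> T_plus" and "x \<in> collectors V T_plus"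
  shows "(x, y) \<in> Ep"
  using assms(1)
proof (cases rule: backward_treeE)
  case reversed
  then show ?thesis
    using backward_tree_in_arc[of Ep x lam] collector_no_in_arc[OF finite_T_plus assms(2)] by blast
qed

lemma arc_in_cover: "(u, v) \<in> T_minus \<union> T_plus \<Longrightarrow> {u, v} \<in> cover"
  unfolding cover_def by blast

lemma hub_in_cover:
  assumes "u \<in> emitters V T_minus" and "v \<in> collectors V T_plus" and "u \<noteq> v"
  shows "{u, v} \<in> cover"
proof -
  have "{u, v} \<in> clique_edges V"
    using assms unfolding emitters_def collectors_def clique_edges_def by blast
  then show ?thesis using assms(1,2) unfolding cover_def by blast
qed

lemma cover_subset_clique_edges: "cover \<subseteq> clique_edges V"
proof
  fix e
  assume "e \<in> cover"
  then consider u v where "e = {u, v}" "(u, v) \<in> T_minus \<union> T_plus" | "e \<in> clique_edges V"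
    unfolding cover_def by blast
  then show "e \<in> clique_edges V"
  proof cases
    case 1
    then show ?thesis
      unfolding clique_edges_def by (blast dest: T_minus_vertices T_plus_vertices)
  qed
qed

(* Either x can be at u in time to cross {u,a}, or {u,a} = e^-(u) is the last edge of the path
   to u and x can already be at a in time to cross it. *)
lemma emitter_reached_in_time:
  assumes "x \<in> V"
  shows "\<exists>u \<in> emitters V T_minus. \<forall>a \<in> V - {u}.
           reach x 0 u (lam {u, a}) \<or> (reach x 0 a (lam {u, a}) \<and> {u, a} \<in> cover)"
proof (cases "x \<in> emitters V T_minus")
  case True
  have "reach x 0 x (lam {x, a})" for a
    by (rule temporal_reach.wait) simp
  with True show ?thesis by blast
next
  case False
  then obtain y where xy: "(x, y) \<in> T_minus" using not_emitter_out_arc[OF assms False] by blast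
  have continues: "\<exists>c. (b, c) \<in> T_minus" if "(a, b) \<in> T_minus" "b \<notin> emitters V T_minus" for a b
    using not_emitter_out_arc[OF _ that(2)] T_minus_vertices[OF that(1)] by blast
  have edges: "{a, b} \<in> cover" if "(a, b) \<in> T_minus" for a b
    using that by (blast intro: arc_in_cover)
  have "\<exists>w u. (w, u) \<in> T_minus \<and> u \<in> emitters V T_minus \<and> reach x (lam {x, y}) w (lam {w, u})"
    using finite_T_minus T_minus_increasing continues edges xy by (rule increasing_path_to_target)
  then obtain w u where wu: "(w, u) \<in> T_minus" and u: "u \<in> emitters V T_minus"
    and path: "reach x (lam {x, y}) w (lam {w, u})"
    by blast
  have to_w: "reach x 0 w (lam {w, u})" using path by (rule temporal_reach_start_mono) simp
  have w_earliest: "(w, u) \<in> Em" using wu u by (rule T_minus_into_emitter)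
  show ?thesis
  proof (intro bexI[OF _ u] ballI)
    fix a
    assume a: "a \<in> V - {u}"
    show "reach x 0 u (lam {u, a}) \<or> (reach x 0 a (lam {u, a}) \<and> {u, a} \<in> cover)"
    proof (cases "a = w")
      case True
      have "{w, u} \<in> cover" using wu by (simp add: arc_in_cover)
      then show ?thesis using to_w True by (simp add: insert_commute)
    next
      case False
      have "lam {w, u} < lam {a, u}"
        using Em_least[OF w_earliest] a False by blast
      then have "reach w (lam {w, u}) u (lam {u, a})"
        using wu by (intro temporal_reach_edge arc_in_cover) (auto simp: insert_commute)
      then show ?thesis using temporal_reach_trans[OF to_w] by blast
    qed
  qed
qed

lemma collector_reaches_in_time:
  assumes "y \<in> V"
  shows "\<exists>v \<in> collectors V T_plus. \<forall>b \<in> V - {v}. \<exists>t.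
           reach v (Suc (lam {v, b})) y t \<or> (reach b (Suc (lam {v, b})) y t \<and> {v, b} \<in> cover)"
proof (cases "y \<in> collectors V T_plus")
  case True
  have "reach y (Suc (lam {y, b})) y (Suc (lam {y, b}))" for b
    by (rule temporal_reach.wait) simp
  with True show ?thesis by blast
next
  case False
  then obtain x where xy: "(x, y) \<in> T_plus" using not_collector_in_arc[OF assms False] by blast
  have continues: "\<exists>c. (c, a) \<in> T_plus" if "(a, b) \<in> T_plus" "a \<notin> collectors V T_plus" for a b
    using not_collector_in_arc[OF _ that(2)] T_plus_vertices[OF that(1)] by blast
  have edges: "{a, b} \<in> cover" if "(a, b) \<in> T_plus" for a b
    using that by (blast intro: arc_in_cover)
  have "\<exists>v z. (v, z) \<in> T_plus \<and> v \<in> collectors V T_plus \<and>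
          reach z (Suc (lam {v, z})) y (Suc (lam {x, y}))"
    using T_plus_increasing continues edges xy by (rule increasing_path_from_source)
  then obtain v z where vz: "(v, z) \<in> T_plus" and v: "v \<in> collectors V T_plus"
    and from_z: "reach z (Suc (lam {v, z})) y (Suc (lam {x, y}))"
    by blast
  have z_latest: "(v, z) \<in> Ep" using vz v by (rule T_plus_from_collector)
  show ?thesis
  proof (intro bexI[OF _ v] ballI exI)
    fix b
    assume b: "b \<in> V - {v}"
    show "reach v (Suc (lam {v, b})) y (Suc (lam {x, y})) \<or>
          (reach b (Suc (lam {v, b})) y (Suc (lam {x, y})) \<and> {v, b} \<in> cover)"
    proof (cases "b = z")
      case True
      have "{v, z} \<in> cover" using vz by (simp add: arc_in_cover)
      then show ?thesis using from_z True by blast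
    next
      case False
      have "lam {b, v} < lam {z, v}"
        using Ep_greatest[OF z_latest] b False by blast
      then have "reach v (Suc (lam {v, b})) z (Suc (lam {v, z}))"
        using vz by (intro temporal_reach_edge arc_in_cover) (auto simp: insert_commute)
      then show ?thesis using temporal_reach_trans[OF _ from_z] by blast
    qed
  qed
qed

lemma cover_reach:
  assumes "x \<in> V" and "y \<in> V" and "x \<noteq> y"
  shows "\<exists>t. reach x 0 y t"
proof -
  obtain u where u: "u \<in> emitters V T_minus"
    and to_u: "\<forall>a \<in> V - {u}. reach x 0 u (lam {u, a}) \<or> (reach x 0 a (lam {u, a}) \<and> {u, a} \<in> cover)"
    using emitter_reached_in_time[OF assms(1)] by blast
  obtain v where v: "v \<in> collectors V T_plus"
    and from_v: "\<forall>b \<in> V - {v}. \<exists>t.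
                   reach v (Suc (lam {v, b})) y t \<or> (reach b (Suc (lam {v, b})) y t \<and> {v, b} \<in> cover)"
    using collector_reaches_in_time[OF assms(2)] by blast
  show ?thesis
  proof (cases "u = v")
    case False
    have "u \<in> V" "v \<in> V" using u v unfolding emitters_def collectors_def by auto
    then have "reach x 0 u (lam {u, v}) \<or> reach x 0 v (lam {u, v})"
      using to_u False by blast
    moreover obtain t where "reach u (Suc (lam {u, v})) y t \<or> reach v (Suc (lam {u, v})) y t"
      using from_v \<open>u \<in> V\<close> False by (auto simp: insert_commute)
    ultimately have "reach x 0 y t"
      using hub_in_cover[OF u v False] by (rule temporal_reach_across_edge)
    then show ?thesis ..
  next
    case True
    obtain a where a: "a \<in> V - {u}" using assms by blast
    then have to_edge: "reach x 0 u (lam {u, a}) \<or> (reach x 0 a (lam {u, a}) \<and> {u, a} \<in> cover)"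
      using to_u by blast
    obtain t where from_edge:
      "reach u (Suc (lam {u, a})) y t \<or> (reach a (Suc (lam {u, a})) y t \<and> {u, a} \<in> cover)"
      using from_v True a by blast
    show ?thesis
    proof (cases "{u, a} \<in> cover")
      case True
      have "reach x 0 y t"
        using to_edge from_edge True by (intro temporal_reach_across_edge) blast+
      then show ?thesis ..
    next
      case False
      then have "reach x 0 u (lam {u, a})" "reach u (Suc (lam {u, a})) y t"
        using to_edge from_edge by blast+
      then have "reach x 0 y t"
        by (blast intro: temporal_reach_trans temporal_reach_end_mono[OF _ le_SucI[OF order.refl]])
      then show ?thesis ..
    qed
  qed
qed

lemma cover_temporal_spanner: "temporal_spanner V lam cover"
  unfolding temporal_spanner_def
proof (intro conjI ballI impI cover_subset_clique_edges)
  fix x y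
  assume "x \<in> V" "y \<in> V" "x \<noteq> y"
  then obtain t where "reach x 0 y t" using cover_reach by blast
  then show "\<exists>p. journey lam cover p x y" using \<open>x \<noteq> y\<close> by (blast dest: temporal_reach_journey)
qed

end

theorem theorem6:
  fixes V :: "'a set" and lam :: "'a set \<Rightarrow> nat"
    and Em Ep :: "('a \<times> 'a) set"
  assumes "simple_temporal_clique V lam"
    and "valid_choice (minus_arcs V lam) Em"
    and "valid_choice (plus_arcs V lam) Ep"
  shows "temporal_spanner V lam
           ({{u, v} | u v. (u, v) \<in> forward_tree lam Em \<union> backward_tree lam Ep}
            \<union> {e \<in> clique_edges V. \<exists>u v. e = {u, v} \<and>
                  u \<in> emitters V (forward_tree lam Em) \<and>
                  v \<in> collectors V (backward_tree lam Ep)})"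
proof -
  interpret fireworks V lam Em Ep using assms by unfold_locales
  show ?thesis using cover_temporal_spanner unfolding cover_def .
qed

end
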